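(* For every integer $N\ge 2$, the set $W_N\subset\mathbb R^{N-1}$ is closed, path connected, and has positive Lebesgue measure. Moreover, its topological boundary in $\mathbb R^{N-1}$ is $$\partial W_N=\{\mathbf w\in W_N:\mathrm{disc}(\mathbf w(x))=0\},$$ where $\mathrm{disc}$ denotes the discriminant of a polynomial.
   Context: Let $N\ge 2$ be an integer and $\mathbb T=\{z\in\mathbb C:|z|=1\}$. For $\mathbf a=(a_1,\dots,a_{N-1})\in\mathbb R^{N-1}$ define $\mathbf c=(c_1,\dots,c_{N-1})\in\mathbb C^{N-1}$ by $c_j=\frac{\sqrt2}{2}(a_j+i\,a_{N-j})$ for $1\le j<N/2$, $c_{N/2}=a_{N/2}$ (only when $N$ is even), and $c_j=\frac{\sqrt2}{2}(a_{N-j}-i\,a_j)$ for $N/2<j\le N-1$ (so $c_{N-j}=\overline{c_j}$). Associate to $\mathbf a$ the monic polynomial $\mathbf a(x)=x^N+\sum_{n=1}^{N-1}c_nx^{N-n}+1$. Define $W_N=\{\mathbf a\in\mathbb R^{N-1}:\text{all roots of }\mathbf a(x)\text{ lie in }\mathbb T\}$. *)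

theory Defs
  imports "HOL-Analysis.Analysis" "Subresultants.Resultant_Prelim"
begin

definition discriminant :: "complex poly \<Rightarrow> complex" where
  "discriminant p = (let n = degree p in
     (-1) ^ (n * (n - 1) div 2) * resultant p (pderiv p) / lead_coeff p)"

definition assoc_coeff :: "nat \<Rightarrow> (nat \<Rightarrow> real) \<Rightarrow> nat \<Rightarrow> complex" where
  "assoc_coeff N a j =
     (if 2 * j < N then complex_of_real (sqrt 2 / 2) * (complex_of_real (a j) + \<i> * complex_of_real (a (N - j)))
      else if 2 * j = N then complex_of_real (a j)
      else complex_of_real (sqrt 2 / 2) * (complex_of_real (a (N - j)) - \<i> * complex_of_real (a j)))"

definition assoc_poly :: "nat \<Rightarrow> (nat \<Rightarrow> real) \<Rightarrow> complex poly" where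
  "assoc_poly N a = monom 1 N + (\<Sum>n = 1..N-1. monom (assoc_coeff N a n) (N - n)) + 1"

text \<open>R^(N-1) is modelled as real^'n with CARD('n) = N-1 and a labelling e of the
  coordinates by {1..N-1}; coordinate a_j of w is w $ e j.\<close>
definition W_set :: "nat \<Rightarrow> (nat \<Rightarrow> 'n::finite) \<Rightarrow> (real ^ 'n) set" where
  "W_set N e = {w. \<forall>z. poly (assoc_poly N (\<lambda>j. w $ e j)) z = 0 \<longrightarrow> cmod z = 1}"

end

(* Points of W_N are the monic self-inversive polynomials p of degree N (coefficients
   satisfying x^N conj(p(1/conj x)) = p) with all roots on the unit circle. Roots of such
   polynomials come in pairs z, 1/conj z, so W_N is the set where p has no root with |z| > 1;
   the bound |p(z)| >= (|z| - 1)^N for monic p with roots in the closed disc makes this closed.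
   On the circle, exp(-iNt/2) p(e^(it)) is real-valued, and simple roots are sign changes of it.
   Sign changes at finitely many fixed points persist under small perturbations, and when p has
   N simple roots they force N distinct roots of every nearby p on the circle: such points are
   interior. At a double root zeta, replacing (x - zeta)^2 by (x - r zeta)(x - zeta/r) keeps p
   self-inversive but moves two roots off the circle for r > 1, so these points, exactly those
   with vanishing discriminant, lie on the boundary.
   Rotating all root arguments linearly to pi joins every point to (x + 1)^N, and x^N + 1
   (the origin) has simple roots, so W_N has interior and hence positive measure. *)

theory Submission
  imports Defs "Subresultants.Subresultant_Gcd" "HOL-Computational_Algebra.Field_as_Ring"
    "HOL-Computational_Algebra.Fundamental_Theorem_Algebra"
begin

lemma cnj_mult_self_unit: "cmod z = 1 \<Longrightarrow> cnj z * z = 1"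
  using complex_norm_square[of z] by (simp add: mult.commute)

definition conj_reflect_poly :: "complex poly \<Rightarrow> complex poly" where
  "conj_reflect_poly p = map_poly cnj (reflect_poly p)"

abbreviation self_inversive :: "complex poly \<Rightarrow> bool" where
  "self_inversive p \<equiv> conj_reflect_poly p = p"

lemma coeff_conj_reflect_poly:
  "coeff (conj_reflect_poly p) m = (if degree p < m then 0 else cnj (coeff p (degree p - m)))"
  by (simp add: conj_reflect_poly_def coeff_map_poly coeff_reflect_poly)

lemma map_poly_cnj_mult: "map_poly cnj (p * q) = map_poly cnj p * map_poly cnj (q :: complex poly)"
  by (rule poly_eq_poly_eq_iff[THEN iffD1]) auto

lemma conj_reflect_poly_mult: "conj_reflect_poly (p * q) = conj_reflect_poly p * conj_reflect_poly q"
  by (simp add: conj_reflect_poly_def reflect_poly_mult map_poly_cnj_mult)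

lemma conj_reflect_poly_1: "conj_reflect_poly 1 = 1"
  by (simp add: conj_reflect_poly_def)

lemma conj_reflect_poly_prod: "conj_reflect_poly (\<Prod>i\<in>I. f i) = (\<Prod>i\<in>I. conj_reflect_poly (f i))"
  by (induction I rule: infinite_finite_induct) (simp_all add: conj_reflect_poly_1 conj_reflect_poly_mult)

lemma conj_reflect_poly_linear:
  assumes "a \<noteq> 0"
  shows "conj_reflect_poly [:-a, 1:] = Polynomial.smult (- cnj a) [:- inverse (cnj a), 1:]"
proof -
  have "conj_reflect_poly [:-a, 1:] = [:1, - cnj a:]"
    by (rule poly_eqI) (simp add: coeff_conj_reflect_poly coeff_pCons split: nat.split)
  then show ?thesis using assms by simp
qed

lemma poly_conj_reflect_poly:
  assumes "z \<noteq> 0"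
  shows "poly (conj_reflect_poly p) z = z ^ degree p * cnj (poly p (inverse (cnj z)))"
  using assms by (simp add: conj_reflect_poly_def poly_map_poly_cnj poly_reflect_poly_nz)

lemma self_inversive_coeff_0:
  "self_inversive p \<Longrightarrow> coeff p 0 = cnj (lead_coeff p)"
  by (metis coeff_conj_reflect_poly diff_zero not_less_zero)

lemma self_inversive_root_inverse_cnj:
  assumes "self_inversive p" "poly p z = 0" "z \<noteq> 0"
  shows "poly p (inverse (cnj z)) = 0"
proof -
  have "inverse (cnj z) \<noteq> 0" using assms(3) by simp
  then have "poly p (inverse (cnj z)) = inverse (cnj z) ^ degree p * cnj (poly p z)"
    using poly_conj_reflect_poly[of "inverse (cnj z)" p] assms(1) by simp
  then show ?thesis using assms(2) by simp
qed

lemma self_inversive_roots_on_circle_iff: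
  assumes "self_inversive p" "poly p 0 \<noteq> 0"
  shows "(\<forall>z. poly p z = 0 \<longrightarrow> cmod z = 1) \<longleftrightarrow> (\<forall>z. 1 < cmod z \<longrightarrow> poly p z \<noteq> 0)"
proof safe
  fix z assume outside: "\<forall>z. 1 < cmod z \<longrightarrow> poly p z \<noteq> 0" and z: "poly p z = 0"
  have "z \<noteq> 0" using z assms(2) by auto
  then have "\<not> 1 < cmod (inverse (cnj z))"
    using outside self_inversive_root_inverse_cnj[OF assms(1) z] by blast
  moreover have "\<not> 1 < cmod z" using outside z by blast
  ultimately show "cmod z = 1"
    using \<open>z \<noteq> 0\<close> one_less_inverse[of "cmod z"] by (fastforce simp: norm_inverse)
qed fastforce

abbreviation poly_of_vec :: "nat \<Rightarrow> (nat \<Rightarrow> 'n::finite) \<Rightarrow> real ^ 'n \<Rightarrow> complex poly" where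
  "poly_of_vec N e w \<equiv> assoc_poly N (\<lambda>j. w $ e j)"

lemma mem_W_set_iff: "w \<in> W_set N e \<longleftrightarrow> (\<forall>z. poly (poly_of_vec N e w) z = 0 \<longrightarrow> cmod z = 1)"
  by (simp add: W_set_def)

lemma coeff_assoc_poly:
  assumes "N > 0"
  shows "coeff (assoc_poly N a) m = (if m = N \<or> m = 0 then 1
           else if m < N then assoc_coeff N a (N - m) else 0)"
proof -
  have "(\<Sum>n = 1..N-1. coeff (monom (assoc_coeff N a n) (N - n)) m)
        = (\<Sum>n = 1..N-1. if n = N - m then assoc_coeff N a n else 0)"
    by (rule sum.cong) (auto simp: coeff_monom)
  also have "\<dots> = (if 0 < m \<and> m < N then assoc_coeff N a (N - m) else 0)"
    by (subst sum.delta) auto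
  finally show ?thesis using assms
    by (auto simp: assoc_poly_def coeff_sum coeff_monom coeff_1)
qed

lemma degree_assoc_poly: "N > 0 \<Longrightarrow> degree (assoc_poly N a) = N"
  by (intro antisym degree_le le_degree) (auto simp: coeff_assoc_poly)

lemma lead_coeff_assoc_poly: "N > 0 \<Longrightarrow> lead_coeff (assoc_poly N a) = 1"
  by (simp add: degree_assoc_poly coeff_assoc_poly)

lemma poly_assoc_poly_0: "N > 0 \<Longrightarrow> poly (assoc_poly N a) 0 = 1"
  by (simp add: poly_0_coeff_0 coeff_assoc_poly)

lemma assoc_poly_nonzero: "N > 0 \<Longrightarrow> assoc_poly N a \<noteq> 0"
  using lead_coeff_assoc_poly[of N a] by auto

lemma assoc_coeff_complement:
  "1 \<le> j \<Longrightarrow> j < N \<Longrightarrow> assoc_coeff N a (N - j) = cnj (assoc_coeff N a j)"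
  by (auto simp: assoc_coeff_def complex_eq_iff)

lemma self_inversive_assoc_poly: "N > 0 \<Longrightarrow> self_inversive (assoc_poly N a)"
  by (rule poly_eqI)
     (auto simp: coeff_conj_reflect_poly degree_assoc_poly coeff_assoc_poly assoc_coeff_complement)

lemma assoc_poly_cong:
  assumes "\<And>j. 1 \<le> j \<Longrightarrow> j < N \<Longrightarrow> a j = b j"
  shows "assoc_poly N a = assoc_poly N b"
proof -
  have "assoc_coeff N a n = assoc_coeff N b n" if "n \<in> {1..N-1}" for n
    using that assms[of n] assms[of "N - n"] by (auto simp: assoc_coeff_def)
  then show ?thesis unfolding assoc_poly_def by (auto intro!: sum.cong)
qed

text \<open>The coordinates a_j are recovered from the coefficient of x^(N-j), which is c_j.\<close>
definition poly_coord :: "nat \<Rightarrow> complex poly \<Rightarrow> nat \<Rightarrow> real" where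
  "poly_coord N p j = (if 2 * j < N then sqrt 2 * Re (coeff p (N - j))
      else if 2 * j = N then Re (coeff p (N - j)) else - sqrt 2 * Im (coeff p (N - j)))"

lemma poly_coord_assoc_poly:
  assumes "1 \<le> j" "j < N"
  shows "poly_coord N (assoc_poly N a) j = a j"
proof -
  have "coeff (assoc_poly N a) (N - j) = assoc_coeff N a j"
    using assms by (simp add: coeff_assoc_poly)
  then show ?thesis by (auto simp: poly_coord_def assoc_coeff_def)
qed

lemma assoc_poly_poly_coord:
  assumes p: "self_inversive p" "degree p = N" "lead_coeff p = 1" and "N > 0"
  shows "assoc_poly N (poly_coord N p) = p"
proof (rule poly_eqI)
  fix m
  have sym: "coeff p k = cnj (coeff p (N - k))" if "k \<le> N" for k
    using that p coeff_conj_reflect_poly[of p k] by simp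
  show "coeff (assoc_poly N (poly_coord N p)) m = coeff p m"
  proof (cases "0 < m \<and> m < N")
    case True
    define j where "j = N - m"
    have j: "m = N - j" "1 \<le> j" "j < N" using True by (auto simp: j_def)
    have "assoc_coeff N (poly_coord N p) j = coeff p m"
      using sym[of j] sym[of m] j
      by (auto simp: assoc_coeff_def poly_coord_def complex_eq_iff)
    then show ?thesis using True j by (simp add: coeff_assoc_poly)
  next
    case False
    then show ?thesis
      using p self_inversive_coeff_0[of p] \<open>N > 0\<close> by (auto simp: coeff_assoc_poly coeff_eq_0)
  qed
qed

definition poly_vec :: "nat \<Rightarrow> (nat \<Rightarrow> 'n::finite) \<Rightarrow> complex poly \<Rightarrow> real ^ 'n" where
  "poly_vec N e p = (\<chi> i. poly_coord N p (inv_into {1..N-1} e i))"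

context
  fixes N :: nat and e :: "nat \<Rightarrow> 'n::finite"
  assumes e: "bij_betw e {1..N-1} (UNIV :: 'n set)"
begin

lemma poly_of_vec_poly_vec:
  assumes "self_inversive p" "degree p = N" "lead_coeff p = 1" "N > 0"
  shows "poly_of_vec N e (poly_vec N e p) = p"
proof -
  have "poly_vec N e p $ e j = poly_coord N p j" if "1 \<le> j" "j < N" for j
    using e that by (simp add: poly_vec_def bij_betw_def inv_into_f_f)
  then have "poly_of_vec N e (poly_vec N e p) = assoc_poly N (poly_coord N p)"
    by (intro assoc_poly_cong) auto
  also have "\<dots> = p" by (rule assoc_poly_poly_coord[OF assms])
  finally show ?thesis .
qed

lemma poly_vec_poly_of_vec: "poly_vec N e (poly_of_vec N e w) = w"
proof -
  have "poly_coord N (poly_of_vec N e w) (inv_into {1..N-1} e i) = w $ i" for i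
  proof -
    have "inv_into {1..N-1} e i \<in> {1..N-1}" "e (inv_into {1..N-1} e i) = i"
      using bij_betwE[OF bij_betw_inv_into[OF e]] bij_betw_inv_into_right[OF e] by auto
    then show ?thesis by (auto simp: poly_coord_assoc_poly)
  qed
  then show ?thesis by (simp add: poly_vec_def vec_eq_iff)
qed

lemma poly_vec_mem_W_set_iff:
  assumes "self_inversive p" "degree p = N" "lead_coeff p = 1" "N > 0"
  shows "poly_vec N e p \<in> W_set N e \<longleftrightarrow> (\<forall>z. poly p z = 0 \<longrightarrow> cmod z = 1)"
  by (simp add: mem_W_set_iff poly_of_vec_poly_vec[OF assms])

end

lemma continuous_on_poly_vec:
  assumes "\<And>m. continuous_on S (\<lambda>t. coeff (f t) m)"
  shows "continuous_on S (\<lambda>t. poly_vec N e (f t))"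
proof -
  have "continuous_on S (\<lambda>t. poly_coord N (f t) j)" for j
    unfolding poly_coord_def
    by (cases "2 * j < N"; cases "2 * j = N") (auto intro!: continuous_intros assms)
  then show ?thesis unfolding poly_vec_def by (intro continuous_on_vec_lambda)
qed

lemma continuous_on_coeff_mult:
  fixes f g :: "'a::topological_space \<Rightarrow> 'b::{real_normed_field} poly"
  assumes "\<And>m. continuous_on S (\<lambda>t. coeff (f t) m)" "\<And>m. continuous_on S (\<lambda>t. coeff (g t) m)"
  shows "continuous_on S (\<lambda>t. coeff (f t * g t) m)"
  unfolding coeff_mult by (intro continuous_intros assms)

lemma continuous_on_coeff_prod:
  fixes f :: "'i \<Rightarrow> 'a::topological_space \<Rightarrow> 'b::{real_normed_field} poly"
  assumes "\<And>i m. i \<in> I \<Longrightarrow> continuous_on S (\<lambda>t. coeff (f i t) m)"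
  shows "continuous_on S (\<lambda>t. coeff (\<Prod>i\<in>I. f i t) m)"
  using assms
proof (induction I arbitrary: m rule: infinite_finite_induct)
  case (insert i I)
  then show ?case by (simp add: continuous_on_coeff_mult)
qed auto

lemma continuous_on_coeff_linear:
  fixes a :: "'a::topological_space \<Rightarrow> 'b::real_normed_field"
  shows "continuous_on S a \<Longrightarrow> continuous_on S (\<lambda>t. coeff [:- a t, 1:] m)"
  by (cases m) (auto simp: coeff_pCons intro!: continuous_intros split: nat.split)

lemma discriminant_eq_0_iff_not_rsquarefree:
  assumes "p \<noteq> 0"
  shows "discriminant p = 0 \<longleftrightarrow> \<not> rsquarefree p"
proof -
  have "discriminant p = 0 \<longleftrightarrow> degree (gcd p (pderiv p)) \<noteq> 0"
    using assms by (simp add: discriminant_def Let_def resultant_0_gcd)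
  also have "\<dots> \<longleftrightarrow> (\<exists>z. poly (gcd p (pderiv p)) z = 0)"
  proof
    assume "degree (gcd p (pderiv p)) \<noteq> 0"
    then show "\<exists>z. poly (gcd p (pderiv p)) z = 0"
      by (intro fundamental_theorem_of_algebra) (simp add: constant_degree)
  next
    assume "\<exists>z. poly (gcd p (pderiv p)) z = 0"
    moreover have "gcd p (pderiv p) \<noteq> 0" using assms by simp
    ultimately show "degree (gcd p (pderiv p)) \<noteq> 0"
      by (metis degree_eq_zeroE pCons_0_0 poly_const_conv)
  qed
  also have "\<dots> \<longleftrightarrow> \<not> rsquarefree p"
    by (simp add: rsquarefree_roots poly_eq_0_iff_dvd)
  finally show ?thesis .
qed

lemma norm_poly_lower_bound:
  fixes p :: "complex poly"
  assumes "lead_coeff p = 1" and roots: "\<And>\<rho>. poly p \<rho> = 0 \<Longrightarrow> cmod \<rho> \<le> 1" and "1 \<le> cmod z"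
  shows "(cmod z - 1) ^ degree p \<le> cmod (poly p z)"
proof -
  obtain \<rho> where p: "p = (\<Prod>i<degree p. [:- \<rho> i, 1:])"
    using complex_poly_decompose'[of p] assms(1) by (metis smult_1_left)
  have "poly p (\<rho> i) = 0" if "i < degree p" for i
    using that by (subst p) (auto simp: poly_prod)
  then have "cmod z - 1 \<le> cmod (z - \<rho> i)" if "i < degree p" for i
    using that roots norm_triangle_ineq2[of z "\<rho> i"] by fastforce
  then have "(\<Prod>i<degree p. cmod z - 1) \<le> (\<Prod>i<degree p. cmod (z - \<rho> i))"
    using assms(3) by (intro prod_mono) auto
  also have "\<dots> = cmod (poly p z)"
    by (subst (2) p) (simp add: poly_prod prod_norm)
  finally show ?thesis by simp
qed

lemma continuous_on_poly_of_vec: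
  fixes e :: "nat \<Rightarrow> 'n::finite"
  shows "continuous_on S (\<lambda>w. poly (poly_of_vec N e w) z)"
proof -
  have "continuous_on S (\<lambda>w. assoc_coeff N (\<lambda>j. w $ e j) n)" for n
    unfolding assoc_coeff_def
    by (cases "2 * n < N"; cases "2 * n = N") (auto intro!: continuous_intros)
  then show ?thesis
    by (simp add: assoc_poly_def poly_sum poly_monom) (intro continuous_intros)
qed

lemma closed_W_set:
  assumes "N > 0"
  shows "closed (W_set N e)"
proof -
  have "W_set N e = (\<Inter>z\<in>{z. 1 < cmod z}. {w. (cmod z - 1) ^ N \<le> cmod (poly (poly_of_vec N e w) z)})"
  proof (intro equalityI subsetI)
    fix w assume "w \<in> W_set N e"
    then have "\<And>\<rho>. poly (poly_of_vec N e w) \<rho> = 0 \<Longrightarrow> cmod \<rho> \<le> 1"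
      by (simp add: mem_W_set_iff)
    then have "(cmod z - 1) ^ N \<le> cmod (poly (poly_of_vec N e w) z)" if "1 < cmod z" for z
      using norm_poly_lower_bound[OF lead_coeff_assoc_poly[OF assms]] that
      by (metis degree_assoc_poly[OF assms] less_imp_le)
    then show "w \<in> (\<Inter>z\<in>{z. 1 < cmod z}. {w. (cmod z - 1) ^ N \<le> cmod (poly (poly_of_vec N e w) z)})"
      by blast
  next
    fix w assume w: "w \<in> (\<Inter>z\<in>{z. 1 < cmod z}. {w. (cmod z - 1) ^ N \<le> cmod (poly (poly_of_vec N e w) z)})"
    have "poly (poly_of_vec N e w) z \<noteq> 0" if "1 < cmod z" for z
    proof -
      have "0 < (cmod z - 1) ^ N" using that by simp
      also have "\<dots> \<le> cmod (poly (poly_of_vec N e w) z)" using w that by blast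
      finally show ?thesis by simp
    qed
    then show "w \<in> W_set N e"
      using self_inversive_roots_on_circle_iff[OF self_inversive_assoc_poly] assms
      by (simp add: mem_W_set_iff poly_assoc_poly_0)
  qed
  moreover have "closed {w. (cmod z - 1) ^ N \<le> cmod (poly (poly_of_vec N e w) z)}" for z
    by (intro closed_Collect_le continuous_intros continuous_on_poly_of_vec)
  ultimately show ?thesis by auto
qed

lemma IVT_sign_change:
  fixes f :: "real \<Rightarrow> real"
  assumes "a \<le> b" "continuous_on {a..b} f" "f a * f b \<le> 0"
  shows "\<exists>t\<in>{a..b}. f t = 0"
proof (cases "f a \<le> 0")
  case True
  then have "0 \<le> f b \<or> f a = 0" using assms(3) by (auto simp: mult_le_0_iff)
  then show ?thesis using IVT'[of f a 0 b] True assms(1,2) by force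
next
  case False
  then have "f b \<le> 0" using assms(3) by (auto simp: mult_le_0_iff)
  then show ?thesis using IVT2'[of f b 0 a] False assms(1,2) by force
qed

lemma sign_change_at_simple_zero:
  fixes f :: "real \<Rightarrow> real"
  assumes f: "(f has_real_derivative d) (at x)" and "d \<noteq> 0" "f x = 0"
  shows "\<forall>\<^sub>F s in at_right 0. f (x - s) * f (x + s) < 0"
proof (cases "d > 0")
  case True
  obtain d1 where "d1 > 0" "\<And>h. 0 < h \<Longrightarrow> h < d1 \<Longrightarrow> f x < f (x + h)"
    using DERIV_pos_inc_right[OF f True] by blast
  moreover obtain d2 where "d2 > 0" "\<And>h. 0 < h \<Longrightarrow> h < d2 \<Longrightarrow> f (x - h) < f x"
    using DERIV_pos_inc_left[OF f True] by blast
  ultimately show ?thesis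
    using \<open>f x = 0\<close> by (intro eventually_at_rightI[of 0 "min d1 d2"]) (auto intro: mult_neg_pos)
next
  case False
  then have "d < 0" using \<open>d \<noteq> 0\<close> by simp
  obtain d1 where "d1 > 0" "\<And>h. 0 < h \<Longrightarrow> h < d1 \<Longrightarrow> f (x + h) < f x"
    using DERIV_neg_dec_right[OF f \<open>d < 0\<close>] by blast
  moreover obtain d2 where "d2 > 0" "\<And>h. 0 < h \<Longrightarrow> h < d2 \<Longrightarrow> f x < f (x - h)"
    using DERIV_neg_dec_left[OF f \<open>d < 0\<close>] by blast
  ultimately show ?thesis
    using \<open>f x = 0\<close> by (intro eventually_at_rightI[of 0 "min d1 d2"]) (auto intro: mult_pos_neg)
qed

lemma norm_exp_i_diff_le: "cmod (exp (\<i> * of_real a) - exp (\<i> * of_real b)) \<le> \<bar>a - b\<bar>"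
proof -
  have "exp (\<i> * of_real a) - exp (\<i> * of_real b) = exp (\<i> * of_real b) * (exp (\<i> * of_real (a - b)) - 1)"
    by (simp add: algebra_simps flip: exp_add)
  then have "cmod (exp (\<i> * of_real a) - exp (\<i> * of_real b)) = 2 * \<bar>sin ((a - b) / 2)\<bar>"
    using dist_exp_i_1[of "a - b"] by (simp add: norm_mult)
  also have "\<dots> \<le> \<bar>a - b\<bar>" using abs_sin_x_le_abs_x[of "(a - b) / 2"] by simp
  finally show ?thesis .
qed

text \<open>The phase factor makes this real for self-inversive p of degree N, so roots of p on the
  circle become sign changes of a real function of t.\<close>
definition circle_fun :: "nat \<Rightarrow> complex poly \<Rightarrow> real \<Rightarrow> complex" where
  "circle_fun N p t = exp (- (\<i> * of_nat N * of_real t / 2)) * poly p (exp (\<i> * of_real t))"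

lemma circle_fun_eq_0_iff: "circle_fun N p t = 0 \<longleftrightarrow> poly p (exp (\<i> * of_real t)) = 0"
  by (simp add: circle_fun_def)

lemma Im_circle_fun:
  assumes "self_inversive p" "degree p = N"
  shows "Im (circle_fun N p t) = 0"
proof -
  define z where "z = exp (\<i> * of_real t)"
  have z: "z \<noteq> 0" "inverse (cnj z) = z" by (simp_all add: z_def exp_cnj flip: exp_minus)
  have "poly p z = z ^ N * cnj (poly p z)"
    using poly_conj_reflect_poly[OF z(1), of p] assms z(2) by simp
  moreover have "z ^ N = exp (\<i> * of_nat N * of_real t / 2) * exp (\<i> * of_nat N * of_real t / 2)"
    by (simp add: z_def algebra_simps flip: exp_of_nat_mult exp_add)
  ultimately have "cnj (circle_fun N p t) = circle_fun N p t"
    unfolding circle_fun_def z_def[symmetric]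
    by (simp add: exp_cnj exp_minus field_simps)
  then show ?thesis by (metis Reals_cnj_iff complex_is_Real_iff)
qed

lemma has_vector_derivative_circle_fun:
  "(circle_fun N p has_vector_derivative
     exp (- (\<i> * of_nat N * of_real t / 2)) * (\<i> * exp (\<i> * of_real t) * poly (pderiv p) (exp (\<i> * of_real t))
       - \<i> * of_nat N / 2 * poly p (exp (\<i> * of_real t)))) (at t)"
proof -
  have "((\<lambda>z. exp (- (\<i> * of_nat N * z / 2)) * poly p (exp (\<i> * z))) has_field_derivative
     exp (- (\<i> * of_nat N * of_real t / 2)) * (\<i> * exp (\<i> * of_real t) * poly (pderiv p) (exp (\<i> * of_real t))
       - \<i> * of_nat N / 2 * poly p (exp (\<i> * of_real t)))) (at (of_real t))"
    by (auto intro!: derivative_eq_intros simp: algebra_simps)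
  from has_vector_derivative_real_field[OF this] show ?thesis
    by (simp add: circle_fun_def[abs_def])
qed

lemma circle_fun_sign_change_at_simple_root:
  assumes p: "self_inversive p" "degree p = N"
    and root: "poly p (exp (\<i> * of_real \<theta>)) = 0" "poly (pderiv p) (exp (\<i> * of_real \<theta>)) \<noteq> 0"
  shows "\<forall>\<^sub>F s in at_right 0. Re (circle_fun N p (\<theta> - s)) * Re (circle_fun N p (\<theta> + s)) < 0"
proof -
  define D where "D = exp (- (\<i> * of_nat N * of_real \<theta> / 2)) *
    (\<i> * exp (\<i> * of_real \<theta>) * poly (pderiv p) (exp (\<i> * of_real \<theta>)))"
  have "(circle_fun N p has_vector_derivative D) (at \<theta>)"
    using has_vector_derivative_circle_fun[of N p \<theta>] root(1) by (simp add: D_def)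
  then have Re: "((\<lambda>t. Re (circle_fun N p t)) has_real_derivative Re D) (at \<theta>)"
    and Im: "((\<lambda>t. Im (circle_fun N p t)) has_real_derivative Im D) (at \<theta>)"
    by (simp_all add: has_vector_derivative_complex_iff)
  have "Im D = 0"
    using DERIV_unique[OF Im] Im_circle_fun[OF p] by simp
  moreover have "D \<noteq> 0" using root(2) by (simp add: D_def)
  ultimately have "Re D \<noteq> 0" by (simp add: complex_eq_iff)
  moreover have "Re (circle_fun N p \<theta>) = 0" using root(1) by (simp add: circle_fun_def)
  ultimately show ?thesis by (rule sign_change_at_simple_zero[OF Re])
qed

lemma root_near_circle_fun_sign_change:
  assumes p: "self_inversive p" "degree p = N" and "0 \<le> \<delta>"
    and sign: "Re (circle_fun N p (\<theta> - \<delta>)) * Re (circle_fun N p (\<theta> + \<delta>)) \<le> 0"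
  shows "\<exists>z. poly p z = 0 \<and> cmod z = 1 \<and> cmod (z - exp (\<i> * of_real \<theta>)) \<le> \<delta>"
proof -
  have cont: "continuous_on {\<theta> - \<delta>..\<theta> + \<delta>} (\<lambda>t. Re (circle_fun N p t))"
    unfolding circle_fun_def by (intro continuous_intros) auto
  obtain t where t: "t \<in> {\<theta> - \<delta>..\<theta> + \<delta>}" "Re (circle_fun N p t) = 0"
    using IVT_sign_change[OF _ cont sign] \<open>0 \<le> \<delta>\<close> by auto
  then have "circle_fun N p t = 0" using Im_circle_fun[OF p] by (simp add: complex_eq_iff)
  moreover have "cmod (exp (\<i> * of_real t) - exp (\<i> * of_real \<theta>)) \<le> \<delta>"
    using norm_exp_i_diff_le[of t \<theta>] t(1) by auto
  ultimately show ?thesis by (auto simp: circle_fun_eq_0_iff)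
qed

lemma eventually_separated_at_right:
  fixes Z :: "'a::metric_space set"
  assumes "finite Z"
  shows "\<forall>\<^sub>F d in at_right 0. \<forall>\<zeta>\<in>Z. \<forall>\<zeta>'\<in>Z. \<zeta> \<noteq> \<zeta>' \<longrightarrow> 2 * d < dist \<zeta> \<zeta>'"
proof -
  have "\<forall>\<^sub>F d in at_right 0. \<zeta> \<noteq> \<zeta>' \<longrightarrow> 2 * d < dist \<zeta> \<zeta>'" for \<zeta> \<zeta>' :: 'a
  proof (cases "\<zeta> = \<zeta>'")
    case False
    then show ?thesis by (intro eventually_at_rightI[of 0 "dist \<zeta> \<zeta>' / 2"]) auto
  qed simp
  then show ?thesis using assms by (simp add: eventually_ball_finite)
qed

lemma card_roots_rsquarefree:
  fixes p :: "complex poly"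
  assumes "rsquarefree p"
  shows "card {z. poly p z = 0} = degree p"
proof -
  have "p \<noteq> 0" using assms by (simp add: rsquarefree_def)
  then have "finite {z. poly p z = 0}" by (rule poly_roots_finite)
  then have "degree (\<Prod>z|poly p z = 0. [:-z, 1:]) = card {z. poly p z = 0}"
    by (simp add: degree_prod_sum_eq)
  moreover have "degree p = degree (Polynomial.smult (lead_coeff p) (\<Prod>z|poly p z = 0. [:-z, 1:]))"
    by (simp only: complex_poly_decompose_rsquarefree[OF assms])
  ultimately show ?thesis using \<open>p \<noteq> 0\<close> by simp
qed

lemma roots_eq_image_if_card_eq_degree:
  fixes q :: "'a::idom poly"
  assumes "q \<noteq> 0" "inj_on f Z" "card Z = degree q" "\<And>\<zeta>. \<zeta> \<in> Z \<Longrightarrow> poly q (f \<zeta>) = 0"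
  shows "{z. poly q z = 0} = f ` Z"
proof -
  have fin: "finite {z. poly q z = 0}" using assms(1) by (rule poly_roots_finite)
  have sub: "f ` Z \<subseteq> {z. poly q z = 0}" using assms(4) by auto
  have "card {z. poly q z = 0} \<le> card (f ` Z)"
    using card_poly_roots_bound[OF assms(1)] assms(2,3) by (simp add: card_image)
  then show ?thesis using card_seteq[OF fin sub] by simp
qed

lemma roots_on_circle_if_sign_changes:
  assumes q: "self_inversive q" "degree q = N" "N > 0"
    and Z: "card Z = N" "\<And>\<zeta>. \<zeta> \<in> Z \<Longrightarrow> exp (\<i> * of_real (\<theta> \<zeta>)) = \<zeta>"
    and sep: "\<forall>\<zeta>\<in>Z. \<forall>\<zeta>'\<in>Z. \<zeta> \<noteq> \<zeta>' \<longrightarrow> 2 * \<delta> < dist \<zeta> \<zeta>'" and "0 \<le> \<delta>"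
    and sign: "\<And>\<zeta>. \<zeta> \<in> Z \<Longrightarrow> Re (circle_fun N q (\<theta> \<zeta> - \<delta>)) * Re (circle_fun N q (\<theta> \<zeta> + \<delta>)) \<le> 0"
    and root: "poly q z = 0"
  shows "cmod z = 1"
proof -
  obtain f where f: "\<And>\<zeta>. \<zeta> \<in> Z \<Longrightarrow> poly q (f \<zeta>) = 0 \<and> cmod (f \<zeta>) = 1 \<and> cmod (f \<zeta> - \<zeta>) \<le> \<delta>"
    using root_near_circle_fun_sign_change[OF q(1,2) \<open>0 \<le> \<delta>\<close> sign] Z(2) by metis
  have "inj_on f Z"
  proof (rule inj_onI, rule ccontr)
    fix \<zeta> \<zeta>' assume \<zeta>: "\<zeta> \<in> Z" "\<zeta>' \<in> Z" "f \<zeta> = f \<zeta>'" "\<zeta> \<noteq> \<zeta>'"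
    have "dist \<zeta> \<zeta>' \<le> cmod (f \<zeta> - \<zeta>) + cmod (f \<zeta>' - \<zeta>')"
      using \<zeta>(3) norm_triangle_ineq4[of "f \<zeta> - \<zeta>" "f \<zeta>' - \<zeta>'"] by (simp add: dist_norm norm_minus_commute)
    also have "\<dots> \<le> 2 * \<delta>" using f[OF \<zeta>(1)] f[OF \<zeta>(2)] by simp
    finally show False using sep \<zeta> by fastforce
  qed
  moreover have "q \<noteq> 0" using q by auto
  ultimately have "{z. poly q z = 0} = f ` Z"
    by (intro roots_eq_image_if_card_eq_degree) (use f Z(1) q(2) in auto)
  then obtain \<zeta> where "\<zeta> \<in> Z" "z = f \<zeta>" using root by blast
  then show ?thesis using f by blast
qed

lemma continuous_on_circle_fun_poly_of_vec:
  fixes e :: "nat \<Rightarrow> 'n::finite"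
  shows "continuous_on S (\<lambda>w. circle_fun N (poly_of_vec N e w) t)"
  unfolding circle_fun_def by (intro continuous_intros continuous_on_poly_of_vec)

lemma interior_W_set_if_rsquarefree:
  assumes "N > 0" and w: "w \<in> W_set N e" and sqf: "rsquarefree (poly_of_vec N e w)"
  shows "w \<in> interior (W_set N e)"
proof -
  define Z where "Z = {z. poly (poly_of_vec N e w) z = 0}"
  define C where "C w' t = Re (circle_fun N (poly_of_vec N e w') t)" for w' t
  note p = self_inversive_assoc_poly[OF \<open>N > 0\<close>] degree_assoc_poly[OF \<open>N > 0\<close>]
  have Z: "finite Z" "card Z = N"
    using sqf card_roots_rsquarefree[OF sqf] p(2) poly_roots_finite[OF assoc_poly_nonzero[OF \<open>N > 0\<close>]]
    by (simp_all add: Z_def)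
  have Arg: "exp (\<i> * of_real (Arg \<zeta>)) = \<zeta>" if "\<zeta> \<in> Z" for \<zeta>
    using w that complex_norm_eq_1_exp_eq by (auto simp: Z_def mem_W_set_iff)
  have "\<forall>\<^sub>F \<delta> in at_right 0. \<forall>\<zeta>\<in>Z. C w (Arg \<zeta> - \<delta>) * C w (Arg \<zeta> + \<delta>) < 0"
    unfolding eventually_ball_finite_distrib[OF Z(1)] C_def
    using circle_fun_sign_change_at_simple_root[OF p] Arg sqf
    by (auto simp: Z_def rsquarefree_roots)
  moreover note eventually_separated_at_right[OF Z(1)]
  moreover have "\<forall>\<^sub>F \<delta> in at_right 0. (0::real) < \<delta>" by (rule eventually_at_right_less)
  ultimately have "\<forall>\<^sub>F \<delta> in at_right 0. (\<forall>\<zeta>\<in>Z. C w (Arg \<zeta> - \<delta>) * C w (Arg \<zeta> + \<delta>) < 0) \<and>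
      (\<forall>\<zeta>\<in>Z. \<forall>\<zeta>'\<in>Z. \<zeta> \<noteq> \<zeta>' \<longrightarrow> 2 * \<delta> < dist \<zeta> \<zeta>') \<and> 0 < \<delta>"
    by eventually_elim blast
  then obtain \<delta> where \<delta>: "\<forall>\<zeta>\<in>Z. C w (Arg \<zeta> - \<delta>) * C w (Arg \<zeta> + \<delta>) < 0"
      "\<forall>\<zeta>\<in>Z. \<forall>\<zeta>'\<in>Z. \<zeta> \<noteq> \<zeta>' \<longrightarrow> 2 * \<delta> < dist \<zeta> \<zeta>'" "0 < \<delta>"
    using eventually_happens'[OF trivial_limit_at_right_real] by blast
  define U where "U = (\<Inter>\<zeta>\<in>Z. {w'. C w' (Arg \<zeta> - \<delta>) * C w' (Arg \<zeta> + \<delta>) < 0})"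
  have "open U" unfolding U_def C_def
    by (intro open_INT Z(1) ballI open_Collect_less continuous_intros continuous_on_circle_fun_poly_of_vec)
  moreover have "w \<in> U" using \<delta>(1) by (simp add: U_def)
  moreover have "U \<subseteq> W_set N e"
  proof (intro subsetI)
    fix w' assume "w' \<in> U"
    then have "Re (circle_fun N (poly_of_vec N e w') (Arg \<zeta> - \<delta>)) *
        Re (circle_fun N (poly_of_vec N e w') (Arg \<zeta> + \<delta>)) \<le> 0" if "\<zeta> \<in> Z" for \<zeta>
      using that by (auto simp: U_def C_def less_imp_le)
    then show "w' \<in> W_set N e"
      unfolding mem_W_set_iff using \<delta>(2,3) Arg
      by (blast intro: roots_on_circle_if_sign_changes[OF self_inversive_assoc_poly[OF \<open>N > 0\<close>]
            degree_assoc_poly[OF \<open>N > 0\<close>] \<open>N > 0\<close> Z(2)] less_imp_le)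
  qed
  ultimately show ?thesis by (rule interiorI)
qed

lemma square_dvd_if_not_rsquarefree:
  assumes "p \<noteq> 0" "\<not> rsquarefree p"
  obtains a where "[:-a, 1:] ^ 2 dvd p"
proof -
  obtain a where "order a p \<noteq> 0" "order a p \<noteq> 1" using assms by (auto simp: rsquarefree_def)
  then have "[:-a, 1:] ^ 2 dvd p" unfolding order_divides by auto
  then show ?thesis by (rule that)
qed

text \<open>For |\<zeta>| = 1 the roots r\<zeta> and \<zeta>/r are mirror images in the unit circle, so replacing
  a double root (r = 1) by this pair keeps a polynomial self-inversive while leaving the circle.\<close>
definition reciprocal_pair :: "complex \<Rightarrow> real \<Rightarrow> complex poly" where
  "reciprocal_pair \<zeta> r = [:- (of_real r * \<zeta>), 1:] * [:- (\<zeta> / of_real r), 1:]"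

lemma reciprocal_pair_1: "reciprocal_pair \<zeta> 1 = [:-\<zeta>, 1:] ^ 2"
  by (simp add: reciprocal_pair_def power2_eq_square)

lemma poly_reciprocal_pair_root: "poly (reciprocal_pair \<zeta> r) (of_real r * \<zeta>) = 0"
  by (simp only: reciprocal_pair_def poly_mult) simp

lemma degree_reciprocal_pair: "degree (reciprocal_pair \<zeta> r) = 2"
  by (simp add: reciprocal_pair_def)

lemma lead_coeff_reciprocal_pair: "lead_coeff (reciprocal_pair \<zeta> r) = 1"
  by (simp add: reciprocal_pair_def)

lemma conj_reflect_poly_reciprocal_pair:
  assumes "cmod \<zeta> = 1" "r \<noteq> 0"
  shows "conj_reflect_poly (reciprocal_pair \<zeta> r) = Polynomial.smult (cnj \<zeta> ^ 2) (reciprocal_pair \<zeta> r)"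
proof -
  have \<zeta>: "\<zeta> \<noteq> 0" "inverse (cnj \<zeta>) = \<zeta>"
    using assms(1) cnj_mult_self_unit[OF assms(1)] by (auto intro: inverse_unique)
  define a b where "a = of_real r * \<zeta>" and "b = \<zeta> / of_real r"
  have ab: "a \<noteq> 0" "b \<noteq> 0" "inverse (cnj a) = b" "inverse (cnj b) = a"
    using \<zeta> assms(2) by (simp_all add: a_def b_def divide_inverse mult.commute)
  have "conj_reflect_poly (reciprocal_pair \<zeta> r) =
      Polynomial.smult (- cnj a) [:- b, 1:] * Polynomial.smult (- cnj b) [:- a, 1:]"
    unfolding reciprocal_pair_def a_def[symmetric] b_def[symmetric] conj_reflect_poly_mult
      conj_reflect_poly_linear[OF ab(1)] conj_reflect_poly_linear[OF ab(2)] ab(3,4) ..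
  also have "\<dots> = Polynomial.smult (cnj b * cnj a) ([:- a, 1:] * [:- b, 1:])"
    by (simp only: mult_smult_left mult_smult_right smult_smult minus_mult_minus
          mult.commute[of "[:- b, 1:]"])
  also have "cnj b * cnj a = cnj \<zeta> ^ 2"
    using assms(2) by (simp add: a_def b_def power2_eq_square)
  finally show ?thesis by (simp only: reciprocal_pair_def a_def b_def)
qed

lemma self_inversive_move_double_root:
  assumes p: "self_inversive (reciprocal_pair \<zeta> 1 * q)" and "cmod \<zeta> = 1" "r \<noteq> 0"
  shows "self_inversive (reciprocal_pair \<zeta> r * q)"
proof -
  have unit: "cnj \<zeta> ^ 2 * \<zeta> ^ 2 = 1"
    using cnj_mult_self_unit[OF \<open>cmod \<zeta> = 1\<close>] by (simp flip: power_mult_distrib)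
  have "reciprocal_pair \<zeta> 1 * Polynomial.smult (cnj \<zeta> ^ 2) (conj_reflect_poly q) = reciprocal_pair \<zeta> 1 * q"
    using p conj_reflect_poly_reciprocal_pair[OF \<open>cmod \<zeta> = 1\<close>, of 1]
    by (simp add: conj_reflect_poly_mult)
  moreover have "reciprocal_pair \<zeta> 1 \<noteq> 0"
    using degree_reciprocal_pair[of \<zeta> 1] by auto
  ultimately have "Polynomial.smult (cnj \<zeta> ^ 2) (conj_reflect_poly q) = q"
    by (metis mult_left_cancel)
  then have "conj_reflect_poly q = Polynomial.smult (\<zeta> ^ 2) q"
    using unit by (metis mult.commute smult_smult smult_1_left)
  then show ?thesis
    using conj_reflect_poly_reciprocal_pair[OF \<open>cmod \<zeta> = 1\<close> \<open>r \<noteq> 0\<close>] unit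
    by (simp add: conj_reflect_poly_mult mult.commute)
qed

lemma double_root_factor_W_set:
  assumes "N > 0" and w: "w \<in> W_set N e" and not_sqf: "\<not> rsquarefree (poly_of_vec N e w)"
  obtains \<zeta> q where "cmod \<zeta> = 1" "poly_of_vec N e w = reciprocal_pair \<zeta> 1 * q"
    "\<And>r. r \<noteq> 0 \<Longrightarrow> self_inversive (reciprocal_pair \<zeta> r * q)"
    "\<And>r. degree (reciprocal_pair \<zeta> r * q) = N" "\<And>r. lead_coeff (reciprocal_pair \<zeta> r * q) = 1"
proof -
  define p where "p = poly_of_vec N e w"
  have p: "p \<noteq> 0" "degree p = N" "lead_coeff p = 1" "self_inversive p"
    unfolding p_def
    using assoc_poly_nonzero degree_assoc_poly lead_coeff_assoc_poly self_inversive_assoc_poly \<open>N > 0\<close>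
    by auto
  obtain \<zeta> where "[:-\<zeta>, 1:] ^ 2 dvd p"
    using square_dvd_if_not_rsquarefree[OF p(1)] not_sqf by (auto simp: p_def)
  then obtain q where pq: "p = reciprocal_pair \<zeta> 1 * q"
    by (auto simp: reciprocal_pair_1 elim: dvdE)
  have "poly p \<zeta> = 0" using poly_reciprocal_pair_root[of \<zeta> 1] by (simp add: pq)
  then have \<zeta>: "cmod \<zeta> = 1" using w by (simp add: mem_W_set_iff p_def)
  have pair: "reciprocal_pair \<zeta> r \<noteq> 0" for r
    using degree_reciprocal_pair[of \<zeta> r] by auto
  have q: "q \<noteq> 0" "degree q + 2 = N"
    using p pq pair by (auto simp: degree_mult_eq degree_reciprocal_pair)
  have lead_q: "lead_coeff q = 1"
    using p(3) by (simp only: pq lead_coeff_mult lead_coeff_reciprocal_pair mult_1)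
  show ?thesis
  proof (rule that[OF \<zeta> pq[unfolded p_def]])
    fix r :: real assume "r \<noteq> 0"
    then show "self_inversive (reciprocal_pair \<zeta> r * q)"
      using self_inversive_move_double_root[OF _ \<zeta>] p(4) pq by simp
  next
    fix r
    show "degree (reciprocal_pair \<zeta> r * q) = N"
      using q pair by (simp add: degree_mult_eq degree_reciprocal_pair)
    show "lead_coeff (reciprocal_pair \<zeta> r * q) = 1"
      by (simp only: lead_coeff_mult lead_coeff_reciprocal_pair lead_q mult_1)
  qed
qed

lemma not_interior_W_set_if_not_rsquarefree:
  assumes e: "bij_betw e {1..N-1} (UNIV :: 'n::finite set)" and "N > 0"
    and w: "w \<in> W_set N e" and not_sqf: "\<not> rsquarefree (poly_of_vec N e w)"
  shows "w \<notin> interior (W_set N e)"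
proof
  assume w_int: "w \<in> interior (W_set N e)"
  obtain \<zeta> q where \<zeta>: "cmod \<zeta> = 1" and pq: "poly_of_vec N e w = reciprocal_pair \<zeta> 1 * q"
    and P: "\<And>r. r \<noteq> 0 \<Longrightarrow> self_inversive (reciprocal_pair \<zeta> r * q)"
      "\<And>r. degree (reciprocal_pair \<zeta> r * q) = N" "\<And>r. lead_coeff (reciprocal_pair \<zeta> r * q) = 1"
    using double_root_factor_W_set[OF \<open>N > 0\<close> w not_sqf] by blast
  define v where "v r = poly_vec N e (reciprocal_pair \<zeta> r * q)" for r
  have "continuous_on {0<..} v"
    unfolding v_def reciprocal_pair_def
    by (intro continuous_on_poly_vec continuous_on_coeff_mult continuous_on_coeff_linear
          continuous_intros) auto
  then have "(v \<longlongrightarrow> v 1) (at 1 within {0<..})"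
    by (simp add: continuous_on_def)
  then have "(v \<longlongrightarrow> v 1) (at_right 1)"
    by (rule tendsto_within_subset) auto
  moreover have "v 1 = w"
    using poly_vec_poly_of_vec[OF e] by (simp add: v_def flip: pq)
  ultimately have near: "\<forall>\<^sub>F r in at_right 1. v r \<in> interior (W_set N e)"
    using w_int by (auto intro: topological_tendstoD)
  have outside: "v r \<notin> W_set N e" if "r > 1" for r
  proof -
    have "poly (reciprocal_pair \<zeta> r * q) (of_real r * \<zeta>) = 0"
      by (simp add: poly_reciprocal_pair_root)
    moreover have "cmod (of_real r * \<zeta>) \<noteq> 1" using \<zeta> that by (simp add: norm_mult)
    ultimately show ?thesis
      using that poly_vec_mem_W_set_iff[OF e P(1) P(2,3) \<open>N > 0\<close>] by (auto simp: v_def)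
  qed
  have "\<forall>\<^sub>F r in at_right (1::real). False"
    using near eventually_at_right_less[of "1::real"]
    by eventually_elim (use outside interior_subset in blast)
  then show False by (simp add: trivial_limit_at_right_real)
qed

lemma prod_minus_exp_i:
  fixes N :: nat
  shows "(\<Prod>i<N. - exp (\<i> * of_real (\<phi> i))) = exp (\<i> * of_real (N * pi + (\<Sum>i<N. \<phi> i)))"
proof -
  have "(\<Prod>i<N. - exp (\<i> * of_real (\<phi> i))) = (\<Prod>i<N. exp (\<i> * of_real (pi + \<phi> i)))"
    by (simp add: distrib_left exp_add)
  also have "\<dots> = exp (\<i> * of_real (\<Sum>i<N. pi + \<phi> i))"
    by (simp add: exp_sum sum_distrib_left)
  finally show ?thesis by (simp add: sum.distrib)
qed

lemma self_inversive_prod_linear: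
  assumes "\<And>i. i \<in> I \<Longrightarrow> cmod (\<alpha> i) = 1" "(\<Prod>i\<in>I. - \<alpha> i) = 1"
  shows "self_inversive (\<Prod>i\<in>I. [:- \<alpha> i, 1:])"
proof -
  have "conj_reflect_poly (\<Prod>i\<in>I. [:- \<alpha> i, 1:]) = (\<Prod>i\<in>I. Polynomial.smult (- cnj (\<alpha> i)) [:- \<alpha> i, 1:])"
    unfolding conj_reflect_poly_prod
  proof (rule prod.cong[OF refl])
    fix i assume "i \<in> I"
    then have \<alpha>: "\<alpha> i \<noteq> 0" "inverse (cnj (\<alpha> i)) = \<alpha> i"
      using assms(1) cnj_mult_self_unit[of "\<alpha> i"] by (auto intro: inverse_unique)
    then show "conj_reflect_poly [:- \<alpha> i, 1:] = Polynomial.smult (- cnj (\<alpha> i)) [:- \<alpha> i, 1:]"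
      by (simp only: conj_reflect_poly_linear[OF \<alpha>(1)] \<alpha>(2))
  qed
  also have "\<dots> = Polynomial.smult (cnj (\<Prod>i\<in>I. - \<alpha> i)) (\<Prod>i\<in>I. [:- \<alpha> i, 1:])"
    by (simp only: prod_smult cnj_prod complex_cnj_minus)
  finally show ?thesis using assms(2) by simp
qed

lemma poly_vec_prod_linear_mem_W_set:
  assumes e: "bij_betw e {1..N-1} (UNIV :: 'n::finite set)" and "N > 0"
    and \<alpha>: "\<And>i. i < N \<Longrightarrow> cmod (\<alpha> i) = 1" "(\<Prod>i<N. - \<alpha> i) = 1"
  shows "poly_vec N e (\<Prod>i<N. [:- \<alpha> i, 1:]) \<in> W_set N e"
proof -
  have "self_inversive (\<Prod>i<N. [:- \<alpha> i, 1:])"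
    using \<alpha> by (intro self_inversive_prod_linear) auto
  moreover have "degree (\<Prod>i<N. [:- \<alpha> i, 1:]) = N" by (simp add: degree_prod_eq_sum_degree)
  moreover have "lead_coeff (\<Prod>i<N. [:- \<alpha> i, 1:]) = 1" by (simp add: lead_coeff_prod)
  ultimately show ?thesis
    using poly_vec_mem_W_set_iff[OF e _ _ _ \<open>N > 0\<close>] \<alpha>(1) by (auto simp: poly_prod)
qed

lemma unit_roots_args_sum:
  fixes N :: nat
  assumes "N > 0" and \<rho>: "\<And>i. i < N \<Longrightarrow> cmod (\<rho> i) = 1" "(\<Prod>i<N. - \<rho> i) = 1"
  obtains \<theta> where "\<And>i. i < N \<Longrightarrow> exp (\<i> * of_real (\<theta> i)) = \<rho> i" "(\<Sum>i<N. \<theta> i) = N * pi"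
proof -
  define s where "s = (\<Sum>i<N. Arg (\<rho> i))"
  have Arg: "exp (\<i> * of_real (Arg (\<rho> i))) = \<rho> i" if "i < N" for i
    using \<rho>(1)[OF that] complex_norm_eq_1_exp_eq by blast
  have "exp (\<i> * of_real (N * pi + s)) = 1"
    using prod_minus_exp_i[of "\<lambda>i. Arg (\<rho> i)" N] \<rho>(2) Arg by (simp add: s_def)
  moreover have "exp (\<i> * of_real (N * pi - s)) * exp (\<i> * of_real (N * pi + s)) =
      exp (2 * of_nat N * pi * \<i>)"
    by (simp add: algebra_simps flip: exp_add)
  moreover have "exp (2 * of_nat N * pi * \<i>) = 1"
    by (rule exp_integer_2pi) simp
  ultimately have "exp (\<i> * of_real (N * pi - s)) = 1" by simp
  define \<theta> where "\<theta> i = Arg (\<rho> i) + (if i = 0 then N * pi - s else 0)" for i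
  have "exp (\<i> * of_real (\<theta> i)) = \<rho> i" if "i < N" for i
    using that Arg \<open>exp (\<i> * of_real (N * pi - s)) = 1\<close> by (simp add: \<theta>_def distrib_left exp_add)
  moreover have "(\<Sum>i<N. \<theta> i) = N * pi"
    using \<open>N > 0\<close> by (simp add: \<theta>_def sum.distrib s_def)
  ultimately show ?thesis by (rule that)
qed

lemma W_set_unit_root_factorization:
  assumes "N > 0" and w: "w \<in> W_set N e"
  obtains \<theta> where "poly_of_vec N e w = (\<Prod>i<N. [:- exp (\<i> * of_real (\<theta> i)), 1:])"
    "(\<Sum>i<N. \<theta> i) = N * pi"
proof -
  define p where "p = poly_of_vec N e w"
  obtain \<rho> where p\<rho>: "p = (\<Prod>i<N. [:- \<rho> i, 1:])"
    using complex_poly_decompose'[of p] lead_coeff_assoc_poly[OF \<open>N > 0\<close>] degree_assoc_poly[OF \<open>N > 0\<close>]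
    by (metis p_def smult_1_left)
  have "poly p (\<rho> i) = 0" if "i < N" for i
    using that by (auto simp: p\<rho> poly_prod)
  then have "cmod (\<rho> i) = 1" if "i < N" for i
    using w that by (simp add: mem_W_set_iff p_def)
  moreover have "(\<Prod>i<N. - \<rho> i) = poly p 0" by (simp add: p\<rho> poly_prod)
  then have "(\<Prod>i<N. - \<rho> i) = 1" by (simp add: p_def poly_assoc_poly_0[OF \<open>N > 0\<close>])
  ultimately obtain \<theta> where \<theta>: "\<And>i. i < N \<Longrightarrow> exp (\<i> * of_real (\<theta> i)) = \<rho> i" "(\<Sum>i<N. \<theta> i) = N * pi"
    using unit_roots_args_sum[OF \<open>N > 0\<close>] by blast
  have "p = (\<Prod>i<N. [:- exp (\<i> * of_real (\<theta> i)), 1:])"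
    unfolding p\<rho> by (intro prod.cong) (auto simp: \<theta>(1))
  then show ?thesis using that \<theta>(2) by (simp add: p_def)
qed

text \<open>Moving the arguments of the roots linearly to \<pi> keeps their sum equal to N\<pi>, hence the
  constant coefficient equal to 1, so the path stays among the polynomials of W_N.\<close>
lemma path_component_W_set_base:
  assumes e: "bij_betw e {1..N-1} (UNIV :: 'n::finite set)" and "N > 0" and w: "w \<in> W_set N e"
  shows "path_component (W_set N e) w (poly_vec N e ([:1, 1:] ^ N))"
proof -
  obtain \<theta> where p: "poly_of_vec N e w = (\<Prod>i<N. [:- exp (\<i> * of_real (\<theta> i)), 1:])"
    and \<theta>: "(\<Sum>i<N. \<theta> i) = N * pi"
    using W_set_unit_root_factorization[OF \<open>N > 0\<close> w] by blast
  define \<alpha> where "\<alpha> t i = exp (\<i> * of_real ((1 - t) * \<theta> i + t * pi))" for t i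
  have \<alpha>: "(\<Prod>i<N. - \<alpha> t i) = 1" for t
  proof -
    have "(\<Prod>i<N. - \<alpha> t i) = exp (\<i> * of_real (N * pi + (\<Sum>i<N. (1 - t) * \<theta> i + t * pi)))"
      unfolding \<alpha>_def by (rule prod_minus_exp_i)
    also have "(\<Sum>i<N. (1 - t) * \<theta> i + t * pi) = N * pi"
      by (simp add: sum.distrib \<theta> flip: sum_distrib_left) (simp add: algebra_simps)
    also have "\<i> * of_real (N * pi + N * pi) = 2 * of_nat N * pi * \<i>"
      by (simp add: algebra_simps)
    finally show ?thesis using exp_integer_2pi[of "of_nat N"] by simp
  qed
  define g where "g t = poly_vec N e (\<Prod>i<N. [:- \<alpha> t i, 1:])" for t
  have "path g"
    unfolding path_def g_def \<alpha>_def
    by (intro continuous_on_poly_vec continuous_on_coeff_prod continuous_on_coeff_linear continuous_intros)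
  moreover have "path_image g \<subseteq> W_set N e"
    using poly_vec_prod_linear_mem_W_set[OF e \<open>N > 0\<close>] \<alpha> by (auto simp: path_image_def g_def \<alpha>_def)
  moreover have "pathstart g = w"
    using poly_vec_poly_of_vec[OF e, of w] by (simp add: pathstart_def g_def \<alpha>_def p)
  moreover have "pathfinish g = poly_vec N e ([:1, 1:] ^ N)"
    by (simp add: pathfinish_def g_def \<alpha>_def)
  ultimately show ?thesis unfolding path_component_def by blast
qed

lemma path_connected_W_set:
  assumes "bij_betw e {1..N-1} (UNIV :: 'n::finite set)" "N > 0"
  shows "path_connected (W_set N e)"
  unfolding path_connected_component
  using path_component_W_set_base[OF assms] path_component_sym path_component_trans by metis

lemma zero_mem_interior_W_set:
  assumes "N > 0"
  shows "(0 :: real ^ 'n::finite) \<in> interior (W_set N e)"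
proof -
  have "assoc_coeff N (\<lambda>j. 0) n = 0" for n
    by (simp add: assoc_coeff_def)
  then have p: "poly_of_vec N e (0 :: real ^ 'n) = monom 1 N + 1"
    by (simp add: assoc_poly_def)
  have "0 \<in> W_set N e"
  proof (unfold mem_W_set_iff p, intro allI impI)
    fix z :: complex assume "poly (monom 1 N + 1) z = 0"
    then have "z ^ N = -1" by (simp add: poly_monom eq_neg_iff_add_eq_0)
    then have "cmod z ^ N = 1" by (metis norm_minus_cancel norm_one norm_power)
    then show "cmod z = 1" using \<open>N > 0\<close> by (intro power_eq_imp_eq_base[of "cmod z" N 1]) auto
  qed
  moreover have "rsquarefree (poly_of_vec N e (0 :: real ^ 'n))"
    unfolding rsquarefree_roots p using \<open>N > 0\<close>
    by (auto simp: pderiv_add pderiv_monom poly_monom power_0_left)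
  ultimately show ?thesis by (rule interior_W_set_if_rsquarefree[OF \<open>N > 0\<close>])
qed

lemma emeasure_W_set_pos:
  assumes "N > 0"
  shows "emeasure lborel (W_set N (e :: nat \<Rightarrow> 'n::finite)) > 0"
proof -
  obtain r where r: "r > 0" "ball (0 :: real ^ 'n) r \<subseteq> W_set N e"
    using zero_mem_interior_W_set[OF assms, of e] unfolding mem_interior by blast
  have "0 < emeasure lborel (ball (0 :: real ^ 'n) r)"
    using r(1) by (simp add: emeasure_ball unit_ball_vol_pos)
  also have "\<dots> \<le> emeasure lborel (W_set N e)"
    using r(2) closed_W_set[OF assms, of e] by (intro emeasure_mono) (simp_all add: borel_closed)
  finally show ?thesis .
qed

lemma frontier_W_set:
  assumes "bij_betw e {1..N-1} (UNIV :: 'n::finite set)" "N > 0"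
  shows "frontier (W_set N e) = {w \<in> W_set N e. discriminant (poly_of_vec N e w) = 0}"
proof -
  have "w \<notin> interior (W_set N e) \<longleftrightarrow> discriminant (poly_of_vec N e w) = 0" if "w \<in> W_set N e" for w
    using interior_W_set_if_rsquarefree not_interior_W_set_if_not_rsquarefree assms that
      discriminant_eq_0_iff_not_rsquarefree[OF assoc_poly_nonzero[OF assms(2)]] by blast
  moreover have "frontier (W_set N e) = W_set N e - interior (W_set N e)"
    using closed_W_set[OF assms(2), of e] by (simp add: frontier_def)
  ultimately show ?thesis by blast
qed

theorem mainTheorem5:
  fixes N :: nat and e :: "nat \<Rightarrow> 'n::finite"
  assumes "N \<ge> 2"
    and "CARD('n) = N - 1"
    and "bij_betw e {1..N-1} (UNIV :: 'n set)"
  shows "closed (W_set N e) \<and>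
         path_connected (W_set N e) \<and>
         emeasure lborel (W_set N e) > 0 \<and>
         frontier (W_set N e) =
           {w \<in> W_set N e. discriminant (assoc_poly N (\<lambda>j. w $ e j)) = 0}"
proof -
  have "N > 0" using assms(1) by simp
  then show ?thesis
    using closed_W_set path_connected_W_set[OF assms(3)] emeasure_W_set_pos frontier_W_set[OF assms(3)]
    by blast
qed

end
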